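(* Let $C$ be a Reedy category. If $([m],X)$ and $([n],Y)$ are objects of $\int N^{--,+}_+(C)$ and $(\alpha,\theta)\colon([m],X)\to([n],Y)$ is a morphism of $\int N^{-,+}(C)$, then $\alpha\colon[m]\to[n]$ is injective. Consequently $\int N^{--,+}_+(C)$ is a full subcategory of $\int N^{-,+}(C)$.
   Context: A Reedy category $(C,C_-,C_+)$: wide subcategories with unique factorization of every morphism as ($C_-$ then $C_+$), every morphism of $C_\pm$ decidably identity or not, and the relation ($x<'y$ iff non-identity $x\to y$ in $C_+$ or non-identity $y\to x$ in $C_-$) well-founded. $\Delta$: finite ordinals $[n]=\{0<\dots<n\}$ and order-preserving maps. $\int N^{-,+}(C)$: objects $([n],X)$ with $X\colon[n]\to C$ a functor sending all morphisms into $C_-$; morphisms $([m],X)\to([n],Y)$ are $(\alpha,\theta)$ with $\alpha\colon[m]\to[n]$ in $\Delta$ and $\theta\colon X\Rightarrow Y\circ\alpha$ with all components in $C_+$; composition $(\beta,\varphi)\circ(\alpha,\theta)=(\beta\alpha,(\varphi\alpha)\circ\theta)$. $\int N^{--,+}_+(C)$: the subcategory of objects $([n],X)$ with $X$ reflecting identities ($X(i\le j)$ an identity implies $i=j$) and morphisms $(\alpha,\theta)$ with $\alpha$ injective. *)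

theory Defs
  imports Main
begin

text \<open>A (small) category, presented by its object set, arrow set, domain, codomain,
  composition (Comp g f = g after f) and identities.\<close>
record ('o, 'a) cat =
  Obj  :: "'o set"
  Arr  :: "'a set"
  Dom  :: "'a \<Rightarrow> 'o"
  Cod  :: "'a \<Rightarrow> 'o"
  Comp :: "'a \<Rightarrow> 'a \<Rightarrow> 'a"
  Id   :: "'o \<Rightarrow> 'a"

definition hom :: "('o, 'a) cat \<Rightarrow> 'o \<Rightarrow> 'o \<Rightarrow> 'a set" where
  "hom C x y = {f \<in> Arr C. Dom C f = x \<and> Cod C f = y}"

definition is_category :: "('o, 'a) cat \<Rightarrow> bool" where
  "is_category C \<longleftrightarrow>
     (\<forall>f \<in> Arr C. Dom C f \<in> Obj C \<and> Cod C f \<in> Obj C) \<and>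
     (\<forall>x \<in> Obj C. Id C x \<in> hom C x x) \<and>
     (\<forall>f \<in> Arr C. \<forall>g \<in> Arr C. Cod C f = Dom C g \<longrightarrow>
         Comp C g f \<in> hom C (Dom C f) (Cod C g)) \<and>
     (\<forall>f \<in> Arr C. Comp C f (Id C (Dom C f)) = f \<and> Comp C (Id C (Cod C f)) f = f) \<and>
     (\<forall>f \<in> Arr C. \<forall>g \<in> Arr C. \<forall>h \<in> Arr C. Cod C f = Dom C g \<and> Cod C g = Dom C h \<longrightarrow>
         Comp C h (Comp C g f) = Comp C (Comp C h g) f)"

definition wide_subcat :: "('o, 'a) cat \<Rightarrow> 'a set \<Rightarrow> bool" where
  "wide_subcat C S \<longleftrightarrow> S \<subseteq> Arr C \<and> (\<forall>x \<in> Obj C. Id C x \<in> S) \<and>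
     (\<forall>f \<in> S. \<forall>g \<in> S. Cod C f = Dom C g \<longrightarrow> Comp C g f \<in> S)"

definition reedy_lt :: "('o, 'a) cat \<Rightarrow> 'a set \<Rightarrow> 'a set \<Rightarrow> ('o \<times> 'o) set" where
  "reedy_lt C Cm Cp = {(x, y). x \<in> Obj C \<and> y \<in> Obj C \<and>
      ((\<exists>f \<in> Cp \<inter> hom C x y. f \<noteq> Id C x) \<or> (\<exists>f \<in> Cm \<inter> hom C y x. f \<noteq> Id C y))}"

text \<open>Reedy category (C, C_-, C_+). Decidability of being an identity is automatic
  in classical HOL.\<close>
definition reedy_category :: "('o, 'a) cat \<Rightarrow> 'a set \<Rightarrow> 'a set \<Rightarrow> bool" where
  "reedy_category C Cm Cp \<longleftrightarrow>
     is_category C \<and> wide_subcat C Cm \<and> wide_subcat C Cp \<and>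
     (\<forall>f \<in> Arr C. \<exists>!gh. fst gh \<in> Cm \<and> snd gh \<in> Cp \<and>
         Dom C (fst gh) = Dom C f \<and> Cod C (fst gh) = Dom C (snd gh) \<and>
         Cod C (snd gh) = Cod C f \<and> Comp C (snd gh) (fst gh) = f) \<and>
     wf (reedy_lt C Cm Cp)"

text \<open>An object ([m], X) of \<int>N^{-,+}(C): a functor X : [m] \<rightarrow> C with all morphisms in C_-,
  given by its object part Xo and arrow part Xa i j = X(i \<le> j) (only values for
  i \<le> j \<le> m matter).\<close>
definition nerve_obj :: "('o, 'a) cat \<Rightarrow> 'a set \<Rightarrow> nat \<Rightarrow> (nat \<Rightarrow> 'o) \<Rightarrow> (nat \<Rightarrow> nat \<Rightarrow> 'a) \<Rightarrow> bool" where
  "nerve_obj C Cm m Xo Xa \<longleftrightarrow>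
     (\<forall>i \<le> m. Xo i \<in> Obj C) \<and>
     (\<forall>i j. i \<le> j \<and> j \<le> m \<longrightarrow> Xa i j \<in> Cm \<inter> hom C (Xo i) (Xo j)) \<and>
     (\<forall>i \<le> m. Xa i i = Id C (Xo i)) \<and>
     (\<forall>i j k. i \<le> j \<and> j \<le> k \<and> k \<le> m \<longrightarrow> Comp C (Xa j k) (Xa i j) = Xa i k)"

definition reflects_ids :: "('o, 'a) cat \<Rightarrow> nat \<Rightarrow> (nat \<Rightarrow> 'o) \<Rightarrow> (nat \<Rightarrow> nat \<Rightarrow> 'a) \<Rightarrow> bool" where
  "reflects_ids C m Xo Xa \<longleftrightarrow>
     (\<forall>i j. i \<le> j \<and> j \<le> m \<and> (\<exists>z \<in> Obj C. Xa i j = Id C z) \<longrightarrow> i = j)"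

definition nerve_obj_sub :: "('o, 'a) cat \<Rightarrow> 'a set \<Rightarrow> nat \<Rightarrow> (nat \<Rightarrow> 'o) \<Rightarrow> (nat \<Rightarrow> nat \<Rightarrow> 'a) \<Rightarrow> bool" where
  "nerve_obj_sub C Cm m Xo Xa \<longleftrightarrow> nerve_obj C Cm m Xo Xa \<and> reflects_ids C m Xo Xa"

definition nerve_mor :: "('o, 'a) cat \<Rightarrow> 'a set \<Rightarrow> 'a set \<Rightarrow>
    nat \<Rightarrow> (nat \<Rightarrow> 'o) \<Rightarrow> (nat \<Rightarrow> nat \<Rightarrow> 'a) \<Rightarrow>
    nat \<Rightarrow> (nat \<Rightarrow> 'o) \<Rightarrow> (nat \<Rightarrow> nat \<Rightarrow> 'a) \<Rightarrow>
    (nat \<Rightarrow> nat) \<Rightarrow> (nat \<Rightarrow> 'a) \<Rightarrow> bool" where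
  "nerve_mor C Cm Cp m Xo Xa n Yo Ya \<alpha> \<theta> \<longleftrightarrow>
     (\<forall>i \<le> m. \<alpha> i \<le> n) \<and>
     (\<forall>i j. i \<le> j \<and> j \<le> m \<longrightarrow> \<alpha> i \<le> \<alpha> j) \<and>
     (\<forall>i \<le> m. \<theta> i \<in> Cp \<inter> hom C (Xo i) (Yo (\<alpha> i))) \<and>
     (\<forall>i j. i \<le> j \<and> j \<le> m \<longrightarrow>
        Comp C (\<theta> j) (Xa i j) = Comp C (Ya (\<alpha> i) (\<alpha> j)) (\<theta> i))"

end

theory Submission
  imports Defs
begin

text \<open>If \<alpha> i = \<alpha> j for i < j, naturality of \<theta> at i \<le> j reads \<theta> j \<circ> X(i \<le> j) = \<theta> i, so
  \<theta> i \<in> C_+ has the two Reedy factorizations (X(i \<le> j), \<theta> j) and (id, \<theta> i). By uniqueness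
  X(i \<le> j) is an identity, contradicting that X reflects identities.\<close>

lemma reedy_factorization_unique:
  assumes R: "reedy_category C Cm Cp"
    and g: "g \<in> Cm" "g' \<in> Cm" and h: "h \<in> Cp" "h' \<in> Cp"
    and composable: "Cod C g = Dom C h" "Cod C g' = Dom C h'"
    and same_ends: "Dom C g' = Dom C g" "Cod C h' = Cod C h"
    and eq: "Comp C h' g' = Comp C h g"
  shows "g' = g \<and> h' = h"
proof -
  have cat: "is_category C" and "Cm \<subseteq> Arr C" "Cp \<subseteq> Arr C"
    using R unfolding reedy_category_def wide_subcat_def by auto
  then have comp: "Comp C h g \<in> hom C (Dom C g) (Cod C h)"
    using g h composable unfolding is_category_def by blast
  define factors where "factors gh \<longleftrightarrow> fst gh \<in> Cm \<and> snd gh \<in> Cp \<and>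
      Dom C (fst gh) = Dom C (Comp C h g) \<and> Cod C (fst gh) = Dom C (snd gh) \<and>
      Cod C (snd gh) = Cod C (Comp C h g) \<and> Comp C (snd gh) (fst gh) = Comp C h g" for gh
  have "\<exists>!gh. factors gh"
    using R comp unfolding reedy_category_def hom_def factors_def by blast
  moreover have "factors (g, h)" "factors (g', h')"
    using g h composable same_ends eq comp unfolding factors_def hom_def by auto
  ultimately have "(g', h') = (g, h)"
    by blast
  then show ?thesis by simp
qed

lemma reedy_minus_is_id_if_comp_plus:
  assumes R: "reedy_category C Cm Cp"
    and g: "g \<in> Cm" and h: "h \<in> Cp" and composable: "Cod C g = Dom C h"
    and comp_plus: "Comp C h g \<in> Cp"
  shows "g = Id C (Dom C g)"
proof -
  have cat: "is_category C" and wm: "wide_subcat C Cm" and "wide_subcat C Cp"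
    using R unfolding reedy_category_def by auto
  then have g_arr: "g \<in> Arr C" and h_arr: "h \<in> Arr C"
    using g h unfolding wide_subcat_def by auto
  then have dom_g: "Dom C g \<in> Obj C"
    using cat unfolding is_category_def by blast
  have id_g: "Id C (Dom C g) \<in> Cm" "Id C (Dom C g) \<in> hom C (Dom C g) (Dom C g)"
    using dom_g wm cat unfolding wide_subcat_def is_category_def by auto
  have hg: "Comp C h g \<in> hom C (Dom C g) (Cod C h)"
    using cat g_arr h_arr composable unfolding is_category_def by blast
  have "Comp C (Comp C h g) (Id C (Dom C (Comp C h g))) = Comp C h g"
    using cat hg unfolding is_category_def hom_def by blast
  then have "Comp C (Comp C h g) (Id C (Dom C g)) = Comp C h g"
    using hg by (simp add: hom_def)
  moreover have "Cod C (Id C (Dom C g)) = Dom C (Comp C h g)" "Dom C (Id C (Dom C g)) = Dom C g"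
    "Cod C (Comp C h g) = Cod C h"
    using id_g(2) hg by (auto simp: hom_def)
  ultimately show ?thesis
    using reedy_factorization_unique[OF R g id_g(1) h comp_plus composable] by simp
qed

lemma nerve_mor_collapse_is_id:
  assumes R: "reedy_category C Cm Cp"
    and X: "nerve_obj C Cm m Xo Xa" and Y: "nerve_obj C Cm n Yo Ya"
    and M: "nerve_mor C Cm Cp m Xo Xa n Yo Ya \<alpha> \<theta>"
    and ij: "i \<le> j" "j \<le> m" and collapse: "\<alpha> i = \<alpha> j"
  shows "Xa i j = Id C (Xo i)"
proof -
  have cat: "is_category C" and Cp_arr: "Cp \<subseteq> Arr C"
    using R unfolding reedy_category_def wide_subcat_def by auto
  have Xij: "Xa i j \<in> Cm \<inter> hom C (Xo i) (Xo j)"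
    using X ij unfolding nerve_obj_def by auto
  have "\<theta> i \<in> Cp \<inter> hom C (Xo i) (Yo (\<alpha> i))" "\<theta> j \<in> Cp \<inter> hom C (Xo j) (Yo (\<alpha> j))"
    using M ij unfolding nerve_mor_def by auto
  then have \<theta>: "\<theta> i \<in> Cp \<inter> hom C (Xo i) (Yo (\<alpha> j))" "\<theta> j \<in> Cp \<inter> hom C (Xo j) (Yo (\<alpha> j))"
    by (simp_all add: collapse)
  have "Ya (\<alpha> j) (\<alpha> j) = Id C (Yo (\<alpha> j))"
    using Y M ij unfolding nerve_obj_def nerve_mor_def by auto
  moreover have "Comp C (Id C (Cod C (\<theta> i))) (\<theta> i) = \<theta> i"
    using cat \<theta>(1) Cp_arr unfolding is_category_def by blast
  ultimately have "Comp C (\<theta> j) (Xa i j) = \<theta> i"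
    using M ij collapse \<theta>(1) unfolding nerve_mor_def hom_def by auto
  then have "Xa i j = Id C (Dom C (Xa i j))"
    using reedy_minus_is_id_if_comp_plus[OF R, of "Xa i j" "\<theta> j"] Xij \<theta> by (auto simp: hom_def)
  then show ?thesis
    using Xij by (simp add: hom_def)
qed

theorem lemma3p5:
  assumes "reedy_category C Cm Cp"
    and "nerve_obj_sub C Cm m Xo Xa"
    and "nerve_obj_sub C Cm n Yo Ya"
    and "nerve_mor C Cm Cp m Xo Xa n Yo Ya \<alpha> \<theta>"
  shows "inj_on \<alpha> {..m}"
proof -
  have X: "nerve_obj C Cm m Xo Xa" "reflects_ids C m Xo Xa"
    and Y: "nerve_obj C Cm n Yo Ya"
    using assms(2,3) unfolding nerve_obj_sub_def by auto
  have "i = j" if "i \<le> j" "j \<le> m" "\<alpha> i = \<alpha> j" for i j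
  proof -
    have "Xa i j = Id C (Xo i)"
      using nerve_mor_collapse_is_id[OF assms(1) X(1) Y assms(4) that] .
    moreover have "Xo i \<in> Obj C"
      using X(1) that unfolding nerve_obj_def by simp
    ultimately show ?thesis
      using X(2) that unfolding reflects_ids_def by blast
  qed
  then show ?thesis
    by (intro inj_onI) (metis atMost_iff nat_le_linear)
qed

end
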